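(* Let $X^{(1)},\dots,X^{(n)}$ be i.i.d. random vectors in $\mathbb{R}^p$ from an absolutely continuous distribution, and let $S_{0,n}=\frac1n\sum_{s=1}^n X^{(s)}(X^{(s)})^T$. If $n<p$, then almost surely the kernel of $S_{0,n}$ contains a vector $q\in\mathbb{R}^p$ all of whose coordinates are nonzero. *)

theory Defs
  imports "HOL-Probability.Probability"
begin

definition outer_prod :: "real ^ 'p \<Rightarrow> real ^ 'p \<Rightarrow> real ^ 'p ^ 'p" where
  "outer_prod x y = (\<chi> i j. x $ i * y $ j)"

definition sample_S0 :: "nat \<Rightarrow> (nat \<Rightarrow> real ^ 'p) \<Rightarrow> real ^ 'p ^ 'p" where
  "sample_S0 n x = (1 / real n) *\<^sub>R (\<Sum>s\<in>{1..n}. outer_prod (x s) (x s))"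

end

theory Submission
  imports Defs
begin

text \<open>The kernel of \<open>S\<^sub>0\<^sub>,\<^sub>n\<close> is the orthogonal complement of the sample vectors, so it
  suffices that this subspace lies in no coordinate hyperplane: a subspace of \<open>\<real>\<^sup>p\<close> meeting
  the complement of every hyperplane \<open>q\<^sub>i = 0\<close> contains a vector avoiding all of them, by
  moving generically along the finitely many witnesses. Avoiding the hyperplane \<open>q\<^sub>i = 0\<close>
  means \<open>e\<^sub>i \<notin> span X\<close>, which follows if no \<open>X\<^sub>k\<close> lies in the span of \<open>e\<^sub>i\<close> and its
  predecessors. That span has dimension at most \<open>k < p\<close>, hence is Lebesgue-null, and by
  independence and Fubini \<open>X\<^sub>k\<close> a.s. misses it.\<close>

lemma span_image_eq_range_sum:
  fixes v :: "'i \<Rightarrow> 'v::real_vector"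
  assumes "finite I"
  shows "span (v ` I) = range (\<lambda>a. \<Sum>i\<in>I. a i *\<^sub>R v i)"
proof
  show "range (\<lambda>a. \<Sum>i\<in>I. a i *\<^sub>R v i) \<subseteq> span (v ` I)"
    by (auto intro!: span_sum span_scale intro: span_base)
next
  show "span (v ` I) \<subseteq> range (\<lambda>a. \<Sum>i\<in>I. a i *\<^sub>R v i)"
  proof
    fix z assume "z \<in> span (v ` I)"
    then show "z \<in> range (\<lambda>a. \<Sum>i\<in>I. a i *\<^sub>R v i)"
    proof (induction rule: span_induct_alt)
      case base
      show ?case by (rule range_eqI[where x="\<lambda>_. 0"]) simp
    next
      case (step c x w)
      then obtain a t where "w = (\<Sum>i\<in>I. a i *\<^sub>R v i)" "t \<in> I" "x = v t" by blast
      moreover have "(\<Sum>i\<in>I. (if i = t then c else 0) *\<^sub>R v i) = c *\<^sub>R v t"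
        using assms \<open>t \<in> I\<close> by (simp add: if_distrib[of "\<lambda>r. r *\<^sub>R _"] sum.delta cong: if_cong)
      ultimately have "c *\<^sub>R x + w = (\<Sum>i\<in>I. (a i + (if i = t then c else 0)) *\<^sub>R v i)"
        by (simp add: scaleR_add_left sum.distrib)
      then show ?case by (rule range_eqI[where x="\<lambda>i. a i + (if i = t then c else 0)"])
    qed
  qed
qed

text \<open>Coefficients are rationals, and a list rather than a function, so that quantifying over
  them is countable; this is what makes membership in a span of random vectors measurable.\<close>

definition rat_lincomb :: "'v::real_vector \<Rightarrow> (nat \<Rightarrow> 'v) \<Rightarrow> nat set \<Rightarrow> rat \<Rightarrow> rat list \<Rightarrow> 'v" where
  "rat_lincomb e y K c l = of_rat c *\<^sub>R e + (\<Sum>s\<in>K. of_rat (l ! s) *\<^sub>R y s)"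

lemma rat_lincomb_in_span: "rat_lincomb e y K c l \<in> span (insert e (y ` K))"
  unfolding rat_lincomb_def by (intro span_add span_scale span_sum) (auto intro: span_base)

lemma exists_rat_lincomb_approx:
  fixes e :: "'v::real_normed_vector"
  assumes "finite K" and "\<epsilon> > 0"
  shows "\<exists>c l. norm (a0 *\<^sub>R e + (\<Sum>s\<in>K. a s *\<^sub>R y s) - rat_lincomb e y K c l) < \<epsilon>"
proof -
  define B where "B = 1 + norm e + (\<Sum>s\<in>K. norm (y s))"
  have "B > 0" unfolding B_def by (simp add: add_pos_nonneg sum_nonneg)
  define \<delta> where "\<delta> = \<epsilon> / B"
  have "\<delta> > 0" using \<open>B > 0\<close> assms(2) by (simp add: \<delta>_def)
  have "\<exists>r::rat. \<bar>t - of_rat r\<bar> < \<delta>" for t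
  proof -
    obtain r where "r \<in> \<rat>" "t < r" "r < t + \<delta>"
      using Rats_dense_in_real[of t "t + \<delta>"] \<open>\<delta> > 0\<close> by auto
    then obtain r' where "t < of_rat r'" "of_rat r' < t + \<delta>"
      by (auto elim!: Rats_cases)
    then show ?thesis by (intro exI[of _ r']) (simp add: abs_less_iff)
  qed
  then obtain R where R: "\<And>t. \<bar>t - of_rat (R t)\<bar> < \<delta>" by metis
  obtain m where m: "\<And>s. s \<in> K \<Longrightarrow> s < m"
    using finite_nat_bounded[OF assms(1)] by auto
  define l where "l = map (\<lambda>s. R (a s)) [0..<m]"
  have "rat_lincomb e y K (R a0) l = of_rat (R a0) *\<^sub>R e + (\<Sum>s\<in>K. of_rat (R (a s)) *\<^sub>R y s)"
    unfolding rat_lincomb_def l_def using m by (auto intro!: sum.cong)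
  then have "norm (a0 *\<^sub>R e + (\<Sum>s\<in>K. a s *\<^sub>R y s) - rat_lincomb e y K (R a0) l)
      = norm ((a0 - of_rat (R a0)) *\<^sub>R e + (\<Sum>s\<in>K. (a s - of_rat (R (a s))) *\<^sub>R y s))"
    by (simp add: scaleR_diff_left sum_subtractf algebra_simps)
  also have "\<dots> \<le> \<bar>a0 - of_rat (R a0)\<bar> * norm e + (\<Sum>s\<in>K. \<bar>a s - of_rat (R (a s))\<bar> * norm (y s))"
    by (rule order_trans[OF norm_triangle_ineq]) (auto intro!: add_mono order_trans[OF norm_sum] sum_mono)
  also have "\<dots> \<le> \<delta> * norm e + (\<Sum>s\<in>K. \<delta> * norm (y s))"
    using R by (intro add_mono sum_mono mult_right_mono) (auto intro: less_imp_le)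
  also have "\<dots> < \<delta> * B"
    using \<open>\<delta> > 0\<close> by (simp add: B_def algebra_simps sum_distrib_left)
  also have "\<dots> = \<epsilon>"
    using \<open>B > 0\<close> by (simp add: \<delta>_def)
  finally show ?thesis by blast
qed

lemma in_span_insert_image_iff_rat_approx:
  fixes e :: "'v::euclidean_space"
  assumes "finite K"
  shows "z \<in> span (insert e (y ` K))
    \<longleftrightarrow> (\<forall>j::nat. \<exists>c l. norm (z - rat_lincomb e y K c l) < 1 / Suc j)"
proof
  assume "z \<in> span (insert e (y ` K))"
  then obtain a0 where "z - a0 *\<^sub>R e \<in> span (y ` K)"
    by (auto simp: span_insert)
  then obtain a where "z - a0 *\<^sub>R e = (\<Sum>s\<in>K. a s *\<^sub>R y s)"
    using span_image_eq_range_sum[OF assms] by auto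
  then have "z = a0 *\<^sub>R e + (\<Sum>s\<in>K. a s *\<^sub>R y s)"
    by (simp add: algebra_simps)
  then show "\<forall>j::nat. \<exists>c l. norm (z - rat_lincomb e y K c l) < 1 / Suc j"
    using exists_rat_lincomb_approx[OF assms] by (metis of_nat_0_less_iff zero_less_Suc zero_less_divide_1_iff)
next
  assume approx: "\<forall>j::nat. \<exists>c l. norm (z - rat_lincomb e y K c l) < 1 / Suc j"
  have "z \<in> closure (span (insert e (y ` K)))"
    unfolding closure_approachable
  proof (intro allI impI)
    fix \<epsilon> :: real assume "\<epsilon> > 0"
    then obtain j where j: "1 / Suc j < \<epsilon>" using nat_approx_posE by blast
    obtain c l where "norm (z - rat_lincomb e y K c l) < 1 / Suc j" using approx by blast
    then show "\<exists>w\<in>span (insert e (y ` K)). dist w z < \<epsilon>"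
      using j rat_lincomb_in_span[of e y K c l]
      by (intro bexI[of _ "rat_lincomb e y K c l"]) (auto simp: dist_norm norm_minus_commute)
  qed
  then show "z \<in> span (insert e (y ` K))" by simp
qed

lemma sets_pair_in_span_insert_image:
  fixes e :: "'v::euclidean_space" and K :: "nat set"
  assumes "finite K" and "k \<in> J"
  shows "{yz \<in> space (PiM K (\<lambda>_. borel) \<Otimes>\<^sub>M PiM J (\<lambda>_. borel)).
      snd yz k \<in> span (insert e (fst yz ` K))} \<in> sets (PiM K (\<lambda>_. borel) \<Otimes>\<^sub>M PiM J (\<lambda>_. borel))"
  unfolding in_span_insert_image_iff_rat_approx[OF assms(1)] rat_lincomb_def using assms(2) by measurable

lemma span_in_null_sets_lborel:
  fixes B :: "'a::euclidean_space set"
  assumes "finite B" and "card B < DIM('a)"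
  shows "span B \<in> null_sets lborel"
proof -
  have "dim (span B) < DIM('a)"
    using dim_le_card[of "span B" B] assms by simp
  then have "span B \<in> null_sets lebesgue"
    using negligible_lowdim negligible_iff_null_sets by blast
  then show ?thesis
    by (subst null_sets_completion_iff[symmetric]) (auto simp: borel_closed)
qed

lemma (in prob_space) AE_indep_var_notin:
  assumes indep: "indep_var N Y N' Z"
    and G: "{yz \<in> space (N \<Otimes>\<^sub>M N'). snd yz \<in> A (fst yz)} \<in> sets (N \<Otimes>\<^sub>M N')"
      (is "?G \<in> _")
    and null: "\<And>y. y \<in> space N \<Longrightarrow> A y \<inter> space N' \<in> null_sets (distr M N' Z)"
  shows "AE \<omega> in M. Z \<omega> \<notin> A (Y \<omega>)"
proof -
  have Y: "Y \<in> measurable M N" and Z: "Z \<in> measurable M N'"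
    and joint: "distr M N Y \<Otimes>\<^sub>M distr M N' Z = distr M (N \<Otimes>\<^sub>M N') (\<lambda>\<omega>. (Y \<omega>, Z \<omega>))"
    using indep unfolding indep_var_distribution_eq by auto
  interpret Z: prob_space "distr M N' Z"
    using Z by (rule prob_space_distr)
  have "emeasure M ((\<lambda>\<omega>. (Y \<omega>, Z \<omega>)) -` ?G \<inter> space M)
      = emeasure (distr M N Y \<Otimes>\<^sub>M distr M N' Z) ?G"
    using Y Z G by (simp add: joint emeasure_distr)
  also have "\<dots> = (\<integral>\<^sup>+y. emeasure (distr M N' Z) (Pair y -` ?G) \<partial>distr M N Y)"
    using G by (intro Z.emeasure_pair_measure_alt) (simp cong: sets_pair_measure_cong)
  also have "\<dots> = (\<integral>\<^sup>+y. 0 \<partial>distr M N Y)"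
  proof (rule nn_integral_cong)
    fix y assume "y \<in> space (distr M N Y)"
    then have "y \<in> space N" by simp
    then have "Pair y -` ?G = A y \<inter> space N'"
      by (auto simp: space_pair_measure)
    then show "emeasure (distr M N' Z) (Pair y -` ?G) = 0"
      using null[OF \<open>y \<in> space N\<close>] by (simp add: null_setsD1)
  qed
  finally have "(\<lambda>\<omega>. (Y \<omega>, Z \<omega>)) -` ?G \<inter> space M \<in> null_sets M"
    using measurable_sets[OF measurable_Pair[OF Y Z] G] by (auto intro!: null_setsI)
  then show ?thesis
    by (rule AE_I') (use measurable_space[OF Y] measurable_space[OF Z] in \<open>auto simp: space_pair_measure\<close>)
qed

lemma (in prob_space) AE_notin_span_insert_indep:
  fixes X :: "nat \<Rightarrow> 'a \<Rightarrow> 'v::euclidean_space" and e :: 'v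
  assumes indep: "indep_vars (\<lambda>_. borel) X I"
    and K: "finite K" "K \<subseteq> I" and k: "k \<in> I - K"
    and ac: "absolutely_continuous lborel (distr M borel (X k))"
    and dim: "Suc (card K) < DIM('v)"
  shows "AE \<omega> in M. X k \<omega> \<notin> span (insert e ((\<lambda>s. X s \<omega>) ` K))"
proof -
  \<comment> \<open>\<open>indep_var\<close> needs both variables of the same type, hence \<open>X k\<close> enters as a
    function on \<open>{k}\<close>.\<close>
  define Mk where "Mk = PiM {k} (\<lambda>_. borel :: 'v measure)"
  define Z where "Z = (\<lambda>\<omega>. restrict (\<lambda>s. X s \<omega>) {k})"
  have Xk: "X k \<in> borel_measurable M"
    using indep k by (auto simp: indep_vars_def)
  have "indep_var (PiM K (\<lambda>_. borel)) (\<lambda>\<omega>. restrict (\<lambda>s. X s \<omega>) K) Mk Z"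
    unfolding Mk_def Z_def using K k by (intro indep_var_restrict[OF indep]) auto
  then have "AE \<omega> in M. Z \<omega> \<notin> {z. z k \<in> span (insert e (restrict (\<lambda>s. X s \<omega>) K ` K))}"
  proof (rule AE_indep_var_notin)
    show "{yz \<in> space (PiM K (\<lambda>_. borel) \<Otimes>\<^sub>M Mk).
        snd yz \<in> {z. z k \<in> span (insert e (fst yz ` K))}} \<in> sets (PiM K (\<lambda>_. borel) \<Otimes>\<^sub>M Mk)"
      unfolding Mk_def using sets_pair_in_span_insert_image[OF K(1) singletonI] by simp
    fix y :: "nat \<Rightarrow> 'v"
    let ?S = "span (insert e (y ` K))"
    have "card (insert e (y ` K)) < DIM('v)"
      using card_image_le[OF K(1), of y] dim by (simp add: card_insert_if K(1))
    then have "?S \<in> null_sets lborel"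
      using K(1) by (intro span_in_null_sets_lborel) auto
    then have "?S \<in> null_sets (distr M borel (X k))"
      using ac by (auto simp: absolutely_continuous_def)
    moreover have "distr M borel (X k) = distr (distr M Mk Z) borel (\<lambda>z. z k)"
      unfolding Mk_def Z_def using Xk by (subst distr_distr) (auto simp: comp_def intro!: measurable_restrict)
    ultimately have "(\<lambda>z. z k) -` ?S \<inter> space Mk \<in> null_sets (distr M Mk Z)"
      unfolding Mk_def Z_def using Xk
      by (auto simp: null_sets_def emeasure_distr borel_closed intro!: measurable_sets)
    then show "{z. z k \<in> ?S} \<inter> space Mk \<in> null_sets (distr M Mk Z)"
      by (simp add: vimage_def Int_def)
  qed
  then show ?thesis by (simp add: Z_def)
qed

lemma notin_span_image_if_successive_notin_span_insert:
  fixes x :: "nat \<Rightarrow> 'v::real_vector"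
  assumes "\<forall>k\<in>{1..n}. x k \<notin> span (insert e (x ` {1..<k}))" and "e \<noteq> 0"
  shows "e \<notin> span (x ` {1..n})"
  using assms(1)
proof (induction n)
  case 0
  then show ?case using assms(2) by simp
next
  case (Suc m)
  then have IH: "e \<notin> span (x ` {1..m})" by simp
  have "x (Suc m) \<notin> span (insert e (x ` {1..m}))"
    using Suc.prems by (auto simp: atLeastLessThanSuc_atLeastAtMost[symmetric])
  then show ?case
    using in_span_insert[of e "x (Suc m)" "x ` {1..m}"] IH
    by (auto simp: atLeastAtMostSuc_conv)
qed

lemma exists_orthogonal_nonzero_component:
  fixes S :: "(real ^ 'n) set"
  assumes "axis i 1 \<notin> span S"
  shows "\<exists>w. (\<forall>x\<in>S. orthogonal x w) \<and> w $ i \<noteq> 0"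
proof -
  obtain y z where y: "y \<in> span S" and z: "\<And>w. w \<in> span S \<Longrightarrow> orthogonal z w"
    and decomp: "axis i 1 = y + z"
    using orthogonal_subspace_decomp_exists by blast
  have "z \<noteq> 0" using y decomp assms by auto
  have "z $ i = z \<bullet> axis i 1" by (simp add: inner_axis)
  also have "\<dots> = z \<bullet> z" using z[OF y] by (simp add: decomp inner_add_right orthogonal_def)
  finally have "z $ i \<noteq> 0" using \<open>z \<noteq> 0\<close> by simp
  moreover have "\<forall>x\<in>S. orthogonal x z"
    using z by (auto intro: span_base simp: orthogonal_commute)
  ultimately show ?thesis by blast
qed

lemma subspace_exists_all_components_nonzero:
  fixes V :: "(real ^ 'n) set"
  assumes V: "subspace V" and nonzero: "\<forall>i. \<exists>w\<in>V. w $ i \<noteq> 0"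
  shows "\<exists>q\<in>V. \<forall>i. q $ i \<noteq> 0"
proof -
  have "\<exists>q\<in>V. \<forall>i\<in>I. q $ i \<noteq> 0" if "finite I" for I
    using that
  proof (induction I rule: finite_induct)
    case empty
    show ?case using subspace_0[OF V] by blast
  next
    case (insert j I)
    then obtain q where q: "q \<in> V" "\<forall>i\<in>I. q $ i \<noteq> 0" by blast
    obtain w where w: "w \<in> V" "w $ j \<noteq> 0" using nonzero by blast
    \<comment> \<open>each coordinate of \<open>q + t w\<close> vanishes for at most one \<open>t\<close>\<close>
    obtain t :: real where t: "t \<notin> (\<lambda>i. - q $ i / w $ i) ` insert j I"
      using ex_new_if_finite[OF infinite_UNIV_char_0, of "(\<lambda>i. - q $ i / w $ i) ` insert j I"]
        insert.hyps(1) by auto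
    have "(q + t *\<^sub>R w) $ i \<noteq> 0" if "i \<in> insert j I" for i
    proof (cases "w $ i = 0")
      case True
      then have "i \<in> I" using that w by auto
      then show ?thesis using True q by simp
    next
      case False
      have "t \<noteq> - q $ i / w $ i" using t that by blast
      with False show ?thesis by (simp add: field_simps)
    qed
    moreover have "q + t *\<^sub>R w \<in> V"
      using V q w by (intro subspace_add subspace_scale)
    ultimately show ?case by blast
  qed
  from this[of UNIV] show ?thesis by simp
qed

lemma sample_S0_mult_eq_0:
  fixes x :: "nat \<Rightarrow> real ^ 'p"
  assumes "\<forall>s\<in>{1..n}. orthogonal (x s) q"
  shows "sample_S0 n x *v q = 0"
proof -
  have "(sample_S0 n x *v q) $ a = 0" for a
  proof -
    have "(sample_S0 n x *v q) $ a = (1 / n) * (\<Sum>j\<in>UNIV. (\<Sum>s\<in>{1..n}. x s $ a * x s $ j) * q $ j)"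
      by (simp add: sample_S0_def outer_prod_def matrix_vector_mult_def sum_component
          sum_distrib_left sum_divide_distrib[symmetric])
    also have "\<dots> = (1 / n) * (\<Sum>s\<in>{1..n}. x s $ a * (x s \<bullet> q))"
      by (simp add: inner_vec_def sum_distrib_left sum_distrib_right mult.assoc sum.swap[of _ UNIV])
    also have "\<dots> = 0" using assms by (simp add: orthogonal_def)
    finally show ?thesis .
  qed
  then show ?thesis by (simp add: vec_eq_iff)
qed

theorem lemma6:
  fixes M :: "'a measure" and X :: "nat \<Rightarrow> 'a \<Rightarrow> real ^ 'p"
    and \<mu> :: "(real ^ 'p) measure" and n :: nat
  assumes "prob_space M"
    and "\<forall>s\<in>{1..n}. X s \<in> borel_measurable M"
    and "prob_space.indep_vars M (\<lambda>_. borel) X {1..n}"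
    and "\<forall>s\<in>{1..n}. distr M borel (X s) = \<mu>"
    and "absolutely_continuous lborel \<mu>"
    and "n < CARD('p)"
  shows "AE \<omega> in M. \<exists>q :: real ^ 'p.
           sample_S0 n (\<lambda>s. X s \<omega>) *v q = 0 \<and> (\<forall>i. q $ i \<noteq> 0)"
proof -
  interpret prob_space M by fact
  have "AE \<omega> in M. \<forall>i\<in>UNIV. \<forall>k\<in>{1..n}. X k \<omega> \<notin> span (insert (axis i 1) ((\<lambda>s. X s \<omega>) ` {1..<k}))"
    using assms(3-6)
    by (intro AE_finite_allI finite_UNIV finite_atLeastAtMost
        AE_notin_span_insert_indep[where I="{1..n}"]) auto
  then show ?thesis
  proof (rule eventually_mono)
    fix \<omega>
    assume "\<forall>i\<in>UNIV. \<forall>k\<in>{1..n}. X k \<omega> \<notin> span (insert (axis i 1) ((\<lambda>s. X s \<omega>) ` {1..<k}))"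
    then have "axis i 1 \<notin> span ((\<lambda>s. X s \<omega>) ` {1..n})" for i
      by (intro notin_span_image_if_successive_notin_span_insert) (auto simp: axis_eq_0_iff)
    then have "\<forall>i. \<exists>w\<in>{w. \<forall>x\<in>(\<lambda>s. X s \<omega>) ` {1..n}. orthogonal x w}. w $ i \<noteq> 0"
      using exists_orthogonal_nonzero_component by blast
    then obtain q where "q \<in> {w. \<forall>x\<in>(\<lambda>s. X s \<omega>) ` {1..n}. orthogonal x w}" "\<forall>i. q $ i \<noteq> 0"
      using subspace_exists_all_components_nonzero[OF subspace_orthogonal_to_vectors] by blast
    then show "\<exists>q. sample_S0 n (\<lambda>s. X s \<omega>) *v q = 0 \<and> (\<forall>i. q $ i \<noteq> 0)"
      using sample_S0_mult_eq_0[of n "\<lambda>s. X s \<omega>" q] by auto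
  qed
qed

end
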